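(* Let $R>0$, let $f\in C_0^\infty(\mathbb{R})$ with $\operatorname{supp}f\subseteq[-R,R]$, and let $g$ be a locally integrable function on $\mathbb{R}$ such that $|g|$ vanishes monotonically at infinity (i.e. $|g(x)|\to0$ as $|x|\to\infty$, with $|g|$ increasing on some half-line $(-\infty,-c]$ and decreasing on some half-line $[c,\infty)$). For $L>0$ define, for $x\in[-L/2,L/2]$, $$h(x):=(f*_Lg-f*_\infty g)(x).$$ Then, with $M:=R\max|f|$, for all sufficiently large $L$: $$h(x)\ \begin{cases}\le M\big(|g(-L/2)|+|g(L/2-R)|\big) & \text{for } x\in[-L/2,-L/2+R),\\ =0 & \text{for } x\in[-L/2+R,\,L/2-R],\\ \le M\big(|g(L/2)|+|g(-L/2+R)|\big) & \text{for } x\in(L/2-R,\,L/2].\end{cases}$$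
   Context: For a function $u$ on $\mathbb{R}$, its periodic restriction $u^{(L)}$ is the $L$-periodic function on $\mathbb{R}$ that coincides with $u$ on $[-L/2,L/2)$. The torus convolution is $(f*_Lg)(x):=\int_{-L/2}^{L/2}f^{(L)}(y)\,g^{(L)}(x-y)\,dy=\int_{-L/2}^{L/2}f(y)\,g^{(L)}(x-y)\,dy$, and $*_\infty$ is the ordinary convolution on $\mathbb{R}$: $(f*_\infty g)(x)=\int_{\mathbb{R}}f(y)g(x-y)\,dy$. *)

theory Defs
  imports "HOL-Analysis.Analysis"
begin

text \<open>Periodic restriction: the L-periodic function agreeing with u on [-L/2, L/2).\<close>
definition per_restr :: "real \<Rightarrow> (real \<Rightarrow> real) \<Rightarrow> real \<Rightarrow> real" where
  "per_restr L u x = u (x - L * of_int \<lfloor>(x + L/2) / L\<rfloor>)"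

definition torus_conv :: "real \<Rightarrow> (real \<Rightarrow> real) \<Rightarrow> (real \<Rightarrow> real) \<Rightarrow> real \<Rightarrow> real" where
  "torus_conv L f g x = (LINT y:{-L/2..L/2}|lborel. per_restr L f y * per_restr L g (x - y))"

definition line_conv :: "(real \<Rightarrow> real) \<Rightarrow> (real \<Rightarrow> real) \<Rightarrow> real \<Rightarrow> real" where
  "line_conv f g x = (LINT y|lborel. f y * g (x - y))"

definition supp :: "(real \<Rightarrow> real) \<Rightarrow> real set" where
  "supp f = closure {x. f x \<noteq> 0}"

definition smooth :: "(real \<Rightarrow> real) \<Rightarrow> bool" where
  "smooth f \<longleftrightarrow> (\<forall>n x. ((deriv ^^ n) f) differentiable (at x))"

definition C0_inf :: "(real \<Rightarrow> real) \<Rightarrow> bool" where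
  "C0_inf f \<longleftrightarrow> smooth f \<and> compact (supp f)"

definition locally_integrable :: "(real \<Rightarrow> real) \<Rightarrow> bool" where
  "locally_integrable g \<longleftrightarrow> (\<forall>K. compact K \<longrightarrow> set_integrable lborel K g)"

definition vanishes_monotonically :: "(real \<Rightarrow> real) \<Rightarrow> bool" where
  "vanishes_monotonically g \<longleftrightarrow>
     ((\<lambda>x. \<bar>g x\<bar>) \<longlongrightarrow> 0) at_top \<and> ((\<lambda>x. \<bar>g x\<bar>) \<longlongrightarrow> 0) at_bot \<and>
     (\<exists>c. (\<forall>x y. x \<le> y \<longrightarrow> y \<le> -c \<longrightarrow> \<bar>g x\<bar> \<le> \<bar>g y\<bar>) \<and>
          (\<forall>x y. c \<le> x \<longrightarrow> x \<le> y \<longrightarrow> \<bar>g y\<bar> \<le> \<bar>g x\<bar>))"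

end

theory Submission imports Defs begin

(*
  Once 2R < L, the support of f lies inside the torus, so the torus convolution is the integral of
  f(y) g^(L)(x - y) over the real line, and g^(L)(x - y) differs from g(x - y) only when x - y
  leaves [-L/2, L/2), where it equals g(x - y + L) or g(x - y - L). For x in the middle region this
  can only happen at the single point y = x - L/2, a null set. For x within R of an end point it
  happens on a set of y of length at most R, on which both g(x - y) and its translate lie in the
  tails of g, where |g| is bounded by its value at the start of the tail.
*)

lemma per_restr_near:
  assumes "L > 0" "-3*L/2 \<le> z" "z < 3*L/2"
  shows "per_restr L u z = (if z < -L/2 then u (z + L) else if z < L/2 then u z else u (z - L))"
proof -
  have "\<lfloor>(z + L/2) / L\<rfloor> = (if z < -L/2 then -1 else if z < L/2 then 0 else 1)"
    using assms by (simp add: floor_eq_iff field_simps)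
  then show ?thesis
    unfolding per_restr_def by (simp add: algebra_simps)
qed

lemma zero_outside_supp: "supp f \<subseteq> S \<Longrightarrow> x \<notin> S \<Longrightarrow> f x = 0"
  unfolding supp_def using closure_subset[of "{x. f x \<noteq> 0}"] by blast

lemma C0_inf_continuous: "C0_inf f \<Longrightarrow> continuous_on UNIV f"
  unfolding C0_inf_def smooth_def
  by (metis continuous_at_imp_continuous_on differentiable_imp_continuous_within funpow_0)

lemma bdd_above_abs_compact_supp:
  assumes "continuous_on UNIV f" "compact (supp f)"
  shows "bdd_above (range (\<lambda>x. \<bar>f x\<bar>))"
proof -
  have "compact (f ` supp f)"
    using assms by (meson compact_continuous_image continuous_on_subset subset_UNIV)
  then obtain B where B: "\<And>x. x \<in> supp f \<Longrightarrow> \<bar>f x\<bar> \<le> B"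
    by (metis bounded_iff compact_imp_bounded image_eqI real_norm_def)
  have "\<bar>f x\<bar> \<le> max B 0" for x
    using B[of x] zero_outside_supp[of f "supp f" x] by fastforce
  then show ?thesis
    by (intro bdd_aboveI) auto
qed

lemma integrable_bounded_mult:
  fixes f g :: "'a \<Rightarrow> real"
  assumes "f \<in> borel_measurable M" "\<And>x. \<bar>f x\<bar> \<le> B" "integrable M g"
  shows "integrable M (\<lambda>x. f x * g x)"
proof (rule Bochner_Integration.integrable_bound)
  show "integrable M (\<lambda>x. B * g x)"
    using assms(3) by simp
  show "(\<lambda>x. f x * g x) \<in> borel_measurable M"
    using assms(1) borel_measurable_integrable[OF assms(3)] by measurable
  have "0 \<le> B"
    using assms(2) by (meson abs_ge_zero order_trans)
  then show "AE x in M. norm (f x * g x) \<le> norm (B * g x)"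
    using assms(2) by (intro AE_I2) (simp add: abs_mult mult_right_mono)
qed

lemma integrable_convolution_integrand:
  fixes f g :: "real \<Rightarrow> real"
  assumes "f \<in> borel_measurable borel" "\<And>y. \<bar>f y\<bar> \<le> B"
    and "\<And>y. y \<notin> {a..b} \<Longrightarrow> f y = 0" and "locally_integrable g"
  shows "integrable lborel (\<lambda>y. f y * g (x - y))"
proof -
  have "integrable lborel (\<lambda>z. indicator {x-b..x-a} z * g z)"
    using assms(4) unfolding locally_integrable_def set_integrable_def by simp
  from lborel_integrable_real_affine[OF this, of "-1" x]
  have "integrable lborel (\<lambda>y. indicator {x-b..x-a} (x - y) * g (x - y))"
    by simp
  then have "integrable lborel (\<lambda>y. f y * (indicator {x-b..x-a} (x - y) * g (x - y)))"
    using assms(1) by (intro integrable_bounded_mult[OF _ assms(2)]) simp_all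
  moreover have "f y * (indicator {x-b..x-a} (x - y) * g (x - y)) = f y * g (x - y)" for y
    using assms(3)[of y] by (auto simp: indicator_def)
  ultimately show ?thesis
    by simp
qed

lemma abs_mult_diff_le:
  fixes a b c :: real
  assumes "\<bar>c\<bar> \<le> F" "\<bar>a - b\<bar> \<le> D"
  shows "\<bar>c * a - c * b\<bar> \<le> F * D"
proof -
  have "\<bar>c * a - c * b\<bar> = \<bar>c\<bar> * \<bar>a - b\<bar>"
    by (metis abs_mult right_diff_distrib)
  also have "\<dots> \<le> F * D"
    using assms by (intro mult_mono) auto
  finally show ?thesis .
qed

lemma abs_integral_if_minus_le:
  fixes E F :: "real \<Rightarrow> real"
  assumes "integrable lborel E" "integrable lborel F" "S \<in> sets borel"
    and "S \<subseteq> {a..b}" "a \<le> b" "0 \<le> C" "\<And>y. y \<in> S \<Longrightarrow> \<bar>E y - F y\<bar> \<le> C"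
  shows "\<bar>(\<integral>y. (if y \<in> S then E y else F y) \<partial>lborel) - (\<integral>y. F y \<partial>lborel)\<bar> \<le> (b - a) * C"
proof -
  have D: "integrable lborel (\<lambda>y. indicator S y * (E y - F y))"
    using integrable_mult_indicator[of S lborel "\<lambda>y. E y - F y"] assms(1-3) by simp
  have bound: "integrable lborel (\<lambda>y. indicator {a..b} y * C)"
    by (intro integrable_mult_left integrable_real_indicator) (auto simp: emeasure_lborel_Icc_eq)
  have "(\<lambda>y. if y \<in> S then E y else F y) = (\<lambda>y. F y + indicator S y * (E y - F y))"
    by (auto simp: indicator_def)
  then have "(\<integral>y. (if y \<in> S then E y else F y) \<partial>lborel)
      = (\<integral>y. F y \<partial>lborel) + (\<integral>y. indicator S y * (E y - F y) \<partial>lborel)"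
    using Bochner_Integration.integral_add[OF assms(2) D] by simp
  then have "(\<integral>y. (if y \<in> S then E y else F y) \<partial>lborel) - (\<integral>y. F y \<partial>lborel)
      = (\<integral>y. indicator S y * (E y - F y) \<partial>lborel)"
    by simp
  also have "\<bar>\<dots>\<bar> \<le> (\<integral>y. indicator {a..b} y * C \<partial>lborel)"
    using assms(4,6,7) by (intro integral_abs_bound_integral[OF D bound]) (auto simp: indicator_def)
  also have "\<dots> = (b - a) * C"
    using assms(5) by simp
  finally show ?thesis .
qed

context
  fixes f g :: "real \<Rightarrow> real" and R L :: real
  assumes f_outside: "\<And>y. y \<notin> {-R..R} \<Longrightarrow> f y = 0"
    and R_nonneg: "0 \<le> R" and L_large: "2 * R < L"
begin

lemma torus_conv_eq_integral:
  "torus_conv L f g x = (\<integral>y. f y * per_restr L g (x - y) \<partial>lborel)"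
proof -
  have "indicator {-L/2..L/2} y * per_restr L f y = f y" for y
  proof (cases "y \<in> {-L/2..L/2}")
    case True
    then have "per_restr L f y = (if y < L/2 then f y else f (y - L))"
      using R_nonneg L_large by (subst per_restr_near) auto
    moreover have "f y = 0 \<and> f (y - L) = 0" if "y = L/2"
      using that R_nonneg L_large f_outside by auto
    ultimately show ?thesis
      using True by (auto simp: indicator_def)
  next
    case False
    then show ?thesis
      using R_nonneg L_large f_outside[of y] by (auto simp: indicator_def)
  qed
  then show ?thesis
    unfolding torus_conv_def set_lebesgue_integral_def real_scaleR_def mult.assoc[symmetric] by simp
qed

lemma per_restr_conv_argument:
  assumes "x \<in> {-L/2..L/2}" "y \<in> {-R..R}"
  shows "per_restr L g (x - y) =
    (if x - y < -L/2 then g (x - y + L) else if x - y < L/2 then g (x - y) else g (x - y - L))"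
  using assms R_nonneg L_large by (intro per_restr_near) auto

context
  assumes conv_integrable: "\<And>x. integrable lborel (\<lambda>y. f y * g (x - y))"
begin

lemma torus_conv_eq_line_conv:
  assumes "x \<in> {-L/2+R..L/2-R}"
  shows "torus_conv L f g x = line_conv f g x"
proof -
  define p where "p = x - L/2"
  \<comment> \<open>The only discrepancy is at y = p, where x - y = L/2 wraps around to -L/2; {p} is an interval of length 0.\<close>
  have pointwise: "f y * per_restr L g (x - y) = (if y \<in> {p} then f y * g (x - L - y) else f y * g (x - y))" for y
  proof (cases "y \<in> {-R..R}")
    case True
    then show ?thesis
      using assms R_nonneg per_restr_conv_argument[of x y] by (auto simp: p_def algebra_simps)
  qed (use f_outside[of y] in auto)
  have "\<bar>torus_conv L f g x - line_conv f g x\<bar> \<le> (p - p) * \<bar>f p * g (x - L - p) - f p * g (x - p)\<bar>"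
    unfolding torus_conv_eq_integral line_conv_def pointwise
    by (intro abs_integral_if_minus_le conv_integrable) auto
  then show ?thesis
    by simp
qed

lemma torus_conv_minus_line_conv_left:
  assumes "x \<in> {-L/2..<-L/2+R}" and f_bound: "\<And>y. \<bar>f y\<bar> \<le> F"
    and "\<And>z. z \<le> -L/2 \<Longrightarrow> \<bar>g z\<bar> \<le> \<bar>g (-L/2)\<bar>"
    and "\<And>z. L/2 - R \<le> z \<Longrightarrow> \<bar>g z\<bar> \<le> \<bar>g (L/2 - R)\<bar>"
  shows "\<bar>torus_conv L f g x - line_conv f g x\<bar> \<le> R * F * (\<bar>g (-L/2)\<bar> + \<bar>g (L/2 - R)\<bar>)"
proof -
  define S where "S = {x + L/2<..R}"
  have pointwise: "f y * per_restr L g (x - y) = (if y \<in> S then f y * g (x + L - y) else f y * g (x - y))" for y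
  proof (cases "y \<in> {-R..R}")
    case True
    then show ?thesis
      using assms(1) L_large per_restr_conv_argument[of x y] by (auto simp: S_def algebra_simps)
  qed (simp add: f_outside)
  moreover have "\<bar>f y * g (x + L - y) - f y * g (x - y)\<bar> \<le> F * (\<bar>g (-L/2)\<bar> + \<bar>g (L/2 - R)\<bar>)"
    if "y \<in> S" for y
  proof (rule abs_mult_diff_le[OF f_bound])
    have "\<bar>g (x + L - y)\<bar> \<le> \<bar>g (L/2 - R)\<bar>"
      using that assms(1) by (intro assms(4)) (auto simp: S_def)
    moreover have "\<bar>g (x - y)\<bar> \<le> \<bar>g (-L/2)\<bar>"
      using that assms(1) by (intro assms(3)) (auto simp: S_def)
    ultimately show "\<bar>g (x + L - y) - g (x - y)\<bar> \<le> \<bar>g (-L/2)\<bar> + \<bar>g (L/2 - R)\<bar>"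
      using abs_triangle_ineq4[of "g (x + L - y)" "g (x - y)"] by linarith
  qed
  moreover have "0 \<le> F"
    using f_bound by (meson abs_ge_zero order_trans)
  ultimately have "\<bar>torus_conv L f g x - line_conv f g x\<bar> \<le> (R - 0) * (F * (\<bar>g (-L/2)\<bar> + \<bar>g (L/2 - R)\<bar>))"
    unfolding torus_conv_eq_integral line_conv_def pointwise using assms(1) R_nonneg
    by (intro abs_integral_if_minus_le conv_integrable) (auto simp: S_def)
  then show ?thesis
    by (simp add: mult.assoc)
qed

lemma torus_conv_minus_line_conv_right:
  assumes "x \<in> {L/2-R<..L/2}" and f_bound: "\<And>y. \<bar>f y\<bar> \<le> F"
    and "\<And>z. z \<le> -L/2 + R \<Longrightarrow> \<bar>g z\<bar> \<le> \<bar>g (-L/2 + R)\<bar>"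
    and "\<And>z. L/2 \<le> z \<Longrightarrow> \<bar>g z\<bar> \<le> \<bar>g (L/2)\<bar>"
  shows "\<bar>torus_conv L f g x - line_conv f g x\<bar> \<le> R * F * (\<bar>g (L/2)\<bar> + \<bar>g (-L/2 + R)\<bar>)"
proof -
  define S where "S = {-R..x - L/2}"
  have pointwise: "f y * per_restr L g (x - y) = (if y \<in> S then f y * g (x - L - y) else f y * g (x - y))" for y
  proof (cases "y \<in> {-R..R}")
    case True
    then show ?thesis
      using assms(1) L_large per_restr_conv_argument[of x y] by (auto simp: S_def algebra_simps)
  qed (simp add: f_outside)
  moreover have "\<bar>f y * g (x - L - y) - f y * g (x - y)\<bar> \<le> F * (\<bar>g (L/2)\<bar> + \<bar>g (-L/2 + R)\<bar>)"
    if "y \<in> S" for y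
  proof (rule abs_mult_diff_le[OF f_bound])
    have "\<bar>g (x - L - y)\<bar> \<le> \<bar>g (-L/2 + R)\<bar>"
      using that assms(1) by (intro assms(3)) (auto simp: S_def)
    moreover have "\<bar>g (x - y)\<bar> \<le> \<bar>g (L/2)\<bar>"
      using that assms(1) by (intro assms(4)) (auto simp: S_def)
    ultimately show "\<bar>g (x - L - y) - g (x - y)\<bar> \<le> \<bar>g (L/2)\<bar> + \<bar>g (-L/2 + R)\<bar>"
      using abs_triangle_ineq4[of "g (x - L - y)" "g (x - y)"] by linarith
  qed
  moreover have "0 \<le> F"
    using f_bound by (meson abs_ge_zero order_trans)
  ultimately have "\<bar>torus_conv L f g x - line_conv f g x\<bar> \<le> (0 - -R) * (F * (\<bar>g (L/2)\<bar> + \<bar>g (-L/2 + R)\<bar>))"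
    unfolding torus_conv_eq_integral line_conv_def pointwise using assms(1) R_nonneg
    by (intro abs_integral_if_minus_le conv_integrable) (auto simp: S_def)
  then show ?thesis
    by (simp add: mult.assoc)
qed

end

end

theorem lemmaA2:
  fixes f g :: "real \<Rightarrow> real" and R :: real
  assumes "R > 0"
    and "C0_inf f" and "supp f \<subseteq> {-R..R}"
    and "locally_integrable g"
    and "vanishes_monotonically g"
  shows "\<exists>L0. \<forall>L \<ge> L0. L > 0 \<longrightarrow>
    (let M = R * (SUP x. \<bar>f x\<bar>); h = (\<lambda>x. torus_conv L f g x - line_conv f g x) in
      (\<forall>x \<in> {-L/2..<-L/2+R}. h x \<le> M * (\<bar>g (-L/2)\<bar> + \<bar>g (L/2 - R)\<bar>)) \<and>
      (\<forall>x \<in> {-L/2+R..L/2-R}. h x = 0) \<and>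
      (\<forall>x \<in> {L/2-R<..L/2}. h x \<le> M * (\<bar>g (L/2)\<bar> + \<bar>g (-L/2 + R)\<bar>)))"
proof -
  obtain c where g_inc: "\<And>z a. z \<le> a \<Longrightarrow> a \<le> -c \<Longrightarrow> \<bar>g z\<bar> \<le> \<bar>g a\<bar>"
    and g_dec: "\<And>z a. c \<le> a \<Longrightarrow> a \<le> z \<Longrightarrow> \<bar>g z\<bar> \<le> \<bar>g a\<bar>"
    using assms(5) unfolding vanishes_monotonically_def by blast
  have f_outside: "\<And>y. y \<notin> {-R..R} \<Longrightarrow> f y = 0"
    using assms(3) by (rule zero_outside_supp)
  have f_cont: "continuous_on UNIV f"
    using assms(2) by (rule C0_inf_continuous)
  define F where "F = (SUP x. \<bar>f x\<bar>)"
  have f_bound: "\<bar>f y\<bar> \<le> F" for y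
    using f_cont assms(2) unfolding F_def C0_inf_def by (intro cSUP_upper bdd_above_abs_compact_supp) auto
  have conv_integrable: "integrable lborel (\<lambda>y. f y * g (x - y))" for x
    using f_cont f_bound f_outside assms(4)
    by (intro integrable_convolution_integrand borel_measurable_continuous_onI) auto
  show ?thesis
    unfolding Let_def F_def[symmetric]
  proof (intro exI[of _ "2 * (\<bar>c\<bar> + R) + 1"] allI impI conjI ballI)
    fix L x :: real
    assume "2 * (\<bar>c\<bar> + R) + 1 \<le> L"
    then have L: "2 * R < L" "c \<le> L/2 - R" "-L/2 + R \<le> -c"
      using assms(1) by auto
    have R0: "0 \<le> R"
      using assms(1) by simp
    have tail_left: "\<And>z. z \<le> -L/2 \<Longrightarrow> \<bar>g z\<bar> \<le> \<bar>g (-L/2)\<bar>"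
      "\<And>z. z \<le> -L/2 + R \<Longrightarrow> \<bar>g z\<bar> \<le> \<bar>g (-L/2 + R)\<bar>"
      using L R0 by (intro g_inc; simp)+
    have tail_right: "\<And>z. L/2 - R \<le> z \<Longrightarrow> \<bar>g z\<bar> \<le> \<bar>g (L/2 - R)\<bar>"
      "\<And>z. L/2 \<le> z \<Longrightarrow> \<bar>g z\<bar> \<le> \<bar>g (L/2)\<bar>"
      using L R0 by (intro g_dec; simp)+
    show "torus_conv L f g x - line_conv f g x \<le> R * F * (\<bar>g (-L/2)\<bar> + \<bar>g (L/2 - R)\<bar>)"
      if "x \<in> {-L/2..<-L/2+R}"
      using f_outside R0 L(1) conv_integrable that f_bound tail_left(1) tail_right(1)
      by (rule torus_conv_minus_line_conv_left[THEN abs_le_D1])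
    show "torus_conv L f g x - line_conv f g x = 0" if "x \<in> {-L/2+R..L/2-R}"
      using f_outside R0 L(1) conv_integrable that
      by (rule torus_conv_eq_line_conv[THEN right_minus_eq[THEN iffD2]])
    show "torus_conv L f g x - line_conv f g x \<le> R * F * (\<bar>g (L/2)\<bar> + \<bar>g (-L/2 + R)\<bar>)"
      if "x \<in> {L/2-R<..L/2}"
      using f_outside R0 L(1) conv_integrable that f_bound tail_left(2) tail_right(2)
      by (rule torus_conv_minus_line_conv_right[THEN abs_le_D1])
  qed
qed

end
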